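(* Let $G$ be a connected finite simple graph on $[n]$ and let $S:=\{\ker x_1,\dots,\ker x_n,\ker(x_1+\dots+x_n)\}\subseteq\mathcal{A}_G$. Then $\langle S\rangle_{\mathcal{A}_G}=\mathcal{A}_G$. In particular, $\mathcal{A}_G$ is projectively unique over $\mathbb{Q}$.
   Context: Let $G=(N,E)$ be a finite simple graph with vertex set $N=[n]=\{1,\dots,n\}$. For $\varnothing\neq I\subseteq N$, $G[I]$ denotes the induced subgraph on $I$, and $H_I:=\ker\big(\sum_{i\in I}x_i\big)$, where $x_1,\dots,x_n$ are the coordinate functions on $\mathbb{Q}^n$. The connected subgraph arrangement is $\mathcal{A}_G:=\{H_I\mid \varnothing\neq I\subseteq N,\ G[I]\text{ connected}\}$. $L(\mathcal{A})$ is the set of intersections of subsets of $\mathcal{A}$, ordered by reverse inclusion. For $\varnothing\neq S\subseteq\mathcal{A}$: $\mathrm{Gen}_0(\mathcal{A},S):=S$, $\mathrm{Gen}_{i+1}(\mathcal{A},S):=\{H\in\mathcal{A}\mid \exists\, J\subseteq L(\mathrm{Gen}_i(\mathcal{A},S)),\ H=\sum_{X\in J}X\}$, and $\langle S\rangle_{\mathcal{A}}:=\bigcup_{i\ge0}\mathrm{Gen}_i(\mathcal{A},S)$. Projectively unique means: every arrangement $\mathcal{C}$ in $\mathbb{Q}^n$ with $L(\mathcal{C})\cong L(\mathcal{A}_G)$ as posets equals $\varphi(\mathcal{A}_G)$ for some $\varphi\in\mathrm{GL}(\mathbb{Q}^n)$. *)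

theory Defs
  imports Complex_Main
begin

text \<open>The vertex set [n] is modelled by a finite type 'n (n = CARD('n));
  Q^n is the type 'n \<Rightarrow> rat (coordinate x_i of v is v i).\<close>

definition simple_graph :: "('n \<Rightarrow> 'n \<Rightarrow> bool) \<Rightarrow> bool" where
  "simple_graph E \<longleftrightarrow> (\<forall>u v. E u v \<longrightarrow> E v u) \<and> (\<forall>u. \<not> E u u)"

definition connected_on :: "('n \<Rightarrow> 'n \<Rightarrow> bool) \<Rightarrow> 'n set \<Rightarrow> bool" where
  "connected_on E I \<longleftrightarrow> I \<noteq> {} \<and>
     (\<forall>u\<in>I. \<forall>v\<in>I. (\<lambda>a b. a \<in> I \<and> b \<in> I \<and> E a b)\<^sup>*\<^sup>* u v)"

definition hypI :: "'n set \<Rightarrow> ('n \<Rightarrow> rat) set" where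
  "hypI I = {x. (\<Sum>i\<in>I. x i) = 0}"

definition subgraph_arr :: "('n::finite \<Rightarrow> 'n \<Rightarrow> bool) \<Rightarrow> ('n \<Rightarrow> rat) set set" where
  "subgraph_arr E = {hypI I | I. I \<noteq> {} \<and> connected_on E I}"

text \<open>Intersection lattice: all intersections of subsets (empty intersection = ambient space).\<close>
definition lat :: "('n \<Rightarrow> rat) set set \<Rightarrow> ('n \<Rightarrow> rat) set set" where
  "lat A = {\<Inter> B | B. B \<subseteq> A}"

definition lat_le :: "('n \<Rightarrow> rat) set \<Rightarrow> ('n \<Rightarrow> rat) set \<Rightarrow> bool" where
  "lat_le X Y \<longleftrightarrow> Y \<subseteq> X"

definition qspan :: "('n \<Rightarrow> rat) set \<Rightarrow> ('n \<Rightarrow> rat) set" where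
  "qspan S = {x. \<exists>F c. finite F \<and> F \<subseteq> S \<and> x = (\<lambda>i. \<Sum>v\<in>F. c v * v i)}"

definition subspace_sum :: "('n \<Rightarrow> rat) set set \<Rightarrow> ('n \<Rightarrow> rat) set" where
  "subspace_sum J = qspan (\<Union> J)"

fun Gen :: "('n \<Rightarrow> rat) set set \<Rightarrow> ('n \<Rightarrow> rat) set set \<Rightarrow> nat \<Rightarrow> ('n \<Rightarrow> rat) set set" where
  "Gen A S 0 = S"
| "Gen A S (Suc i) = {H \<in> A. \<exists>J \<subseteq> lat (Gen A S i). H = subspace_sum J}"

definition generated :: "('n \<Rightarrow> rat) set set \<Rightarrow> ('n \<Rightarrow> rat) set set \<Rightarrow> ('n \<Rightarrow> rat) set set" where
  "generated A S = (\<Union>i. Gen A S i)"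

definition qhyperplane :: "('n::finite \<Rightarrow> rat) set \<Rightarrow> bool" where
  "qhyperplane H \<longleftrightarrow> (\<exists>a. a \<noteq> (\<lambda>_. 0) \<and> H = {x. (\<Sum>i\<in>UNIV. a i * x i) = 0})"

definition arrangement :: "('n::finite \<Rightarrow> rat) set set \<Rightarrow> bool" where
  "arrangement C \<longleftrightarrow> finite C \<and> (\<forall>H\<in>C. qhyperplane H)"

definition qlinear :: "(('n \<Rightarrow> rat) \<Rightarrow> ('n \<Rightarrow> rat)) \<Rightarrow> bool" where
  "qlinear f \<longleftrightarrow> (\<forall>x y. f (\<lambda>i. x i + y i) = (\<lambda>i. f x i + f y i)) \<and>
                  (\<forall>c x. f (\<lambda>i. c * x i) = (\<lambda>i. c * f x i))"

definition lat_iso :: "('n \<Rightarrow> rat) set set \<Rightarrow> ('n \<Rightarrow> rat) set set \<Rightarrow> bool" where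
  "lat_iso C A \<longleftrightarrow> (\<exists>g. bij_betw g (lat C) (lat A) \<and>
      (\<forall>X\<in>lat C. \<forall>Y\<in>lat C. lat_le X Y \<longleftrightarrow> lat_le (g X) (g Y)))"

definition proj_unique :: "('n::finite \<Rightarrow> rat) set set \<Rightarrow> bool" where
  "proj_unique A \<longleftrightarrow> (\<forall>C. arrangement C \<and> lat_iso C A \<longrightarrow>
      (\<exists>\<phi>. qlinear \<phi> \<and> bij \<phi> \<and> C = (\<lambda>H. \<phi> ` H) ` A))"

end

theory Submission
  imports Defs "HOL-Library.Function_Algebras" "HOL-Library.Indicator_Function"
begin

text \<open>Each \<open>H\<^sub>I\<close> is the sum of two flats of \<open>L(S)\<close>: the one cut out by \<open>x\<^sub>k = 0\<close>
  for \<open>k \<in> I\<close>, and the one cut out by \<open>x\<^sub>k = 0\<close> for \<open>k \<notin> I\<close> together with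
  \<open>x\<^sub>1 + \<dots> + x\<^sub>n = 0\<close>. Hence \<open>S\<close> generates \<open>\<A>\<^sub>G\<close> in a single step.

  For projective uniqueness, a lattice isomorphism \<open>L(\<C>) \<cong> L(\<A>\<^sub>G)\<close> sends atoms, i.e.
  hyperplanes, to hyperplanes and preserves intersections. The images of the \<open>n + 1\<close>
  hyperplanes of \<open>S\<close> are therefore in general position, so a linear automorphism \<open>\<phi>\<close>
  of \<open>\<rat>\<^sup>n\<close> carries \<open>S\<close> onto them. Along the generation process \<open>\<phi>\<close> and the lattice
  isomorphism keep agreeing: a generated hyperplane is spanned by flats on which they
  already agree, and a linear automorphism mapping a hyperplane into a hyperplane maps it
  onto it. Since \<open>S\<close> generates \<open>\<A>\<^sub>G\<close>, this gives \<open>\<C> = \<phi>(\<A>\<^sub>G)\<close>.\<close>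
definition qscale :: "rat \<Rightarrow> ('n \<Rightarrow> rat) \<Rightarrow> ('n \<Rightarrow> rat)" where
  "qscale c x = (\<lambda>i. c * x i)"

definition qunit :: "'n \<Rightarrow> 'n \<Rightarrow> rat" where
  "qunit j = (\<lambda>i. if i = j then 1 else 0)"

definition qdot :: "('n::finite \<Rightarrow> rat) \<Rightarrow> ('n \<Rightarrow> rat) \<Rightarrow> rat" where
  "qdot a x = (\<Sum>i\<in>UNIV. a i * x i)"

definition qker :: "('n::finite \<Rightarrow> rat) \<Rightarrow> ('n \<Rightarrow> rat) set" where
  "qker a = {x. qdot a x = 0}"

lemma sum_fun_apply: "(\<Sum>a\<in>A. f a) i = (\<Sum>a\<in>A. f a i)"
  by (induction A rule: infinite_finite_induct) auto

interpretation qvs: vector_space "qscale :: rat \<Rightarrow> ('n \<Rightarrow> rat) \<Rightarrow> _"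
  by unfold_locales (auto simp: qscale_def fun_eq_iff algebra_simps)

lemma span_other_qunits_coord_zero:
  assumes "v \<in> qvs.span (range qunit - {qunit m})"
  shows "v m = 0"
proof -
  have "qvs.subspace {v. v m = 0}"
    by (auto simp: qvs.subspace_def qscale_def)
  with assms show ?thesis
    by (rule qvs.span_induct) (auto simp: qunit_def)
qed

lemma qunit_sum_expansion: "(x :: 'n::finite \<Rightarrow> rat) = (\<Sum>j\<in>UNIV. qscale (x j) (qunit j))"
  by (simp add: fun_eq_iff sum_fun_apply qscale_def qunit_def if_distrib cong: if_cong)

interpretation qfd: finite_dimensional_vector_space
  "qscale :: rat \<Rightarrow> ('n::finite \<Rightarrow> rat) \<Rightarrow> _" "range qunit"
proof unfold_locales
  show "finite (range (qunit :: 'n \<Rightarrow> _))" by simp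
  show "qvs.independent (range (qunit :: 'n \<Rightarrow> _))"
    unfolding qvs.dependent_def
    using span_other_qunits_coord_zero by (fastforce simp: qunit_def)
  show "qvs.span (range (qunit :: 'n \<Rightarrow> _)) = UNIV"
  proof (rule set_eqI, simp)
    fix x :: "'n \<Rightarrow> rat"
    have "(\<Sum>j\<in>UNIV. qscale (x j) (qunit j)) \<in> qvs.span (range qunit)"
      by (intro qvs.span_sum qvs.span_scale qvs.span_base) auto
    then show "x \<in> qvs.span (range qunit)"
      using qunit_sum_expansion[of x] by simp
  qed
qed

lemma qlinear_iff_linear: "qlinear f \<longleftrightarrow> Vector_Spaces.linear qscale qscale f"
  by (simp add: qlinear_def Vector_Spaces.linear_iff qvs.vector_space_axioms
      qscale_def plus_fun_def)

lemma qspan_eq_span: "qspan T = qvs.span T"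
  by (simp add: qspan_def qvs.span_explicit qscale_def fun_eq_iff sum_fun_apply) blast

lemma qlinear_surj_imp_inj:
  fixes f :: "('n::finite \<Rightarrow> rat) \<Rightarrow> ('n \<Rightarrow> rat)"
  shows "qlinear f \<Longrightarrow> surj f \<Longrightarrow> inj f"
  by (simp add: qlinear_iff_linear qfd.linear_surj_imp_inj)

lemma qdot_add: "qdot a (x + y) = qdot a x + qdot a y"
  by (simp add: qdot_def sum.distrib distrib_left)

lemma qdot_qscale: "qdot a (qscale c x) = c * qdot a x"
  by (simp add: qdot_def qscale_def sum_distrib_left algebra_simps)

lemma qdot_sum: "qdot a (\<Sum>v\<in>F. g v) = (\<Sum>v\<in>F. qdot a (g v))"
  by (simp add: qdot_def sum_fun_apply sum_distrib_left sum.swap[of _ F])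

lemma qdot_qunit: "qdot a (qunit j) = a j"
  by (simp add: qdot_def qunit_def if_distrib cong: if_cong)

lemma qdot_indicator: "qdot (indicator I) x = (\<Sum>i\<in>I. x i)"
  by (simp add: qdot_def indicator_def if_distrib sum.If_cases cong: if_cong)

lemma hypI_eq_qker: "hypI I = qker (indicator I)"
  by (simp add: hypI_def qker_def qdot_indicator)

lemma hypI_singleton: "hypI {k} = {x. x k = 0}"
  by (simp add: hypI_def)

lemma subspace_qker: "qvs.subspace (qker a)"
  by (auto simp: qvs.subspace_def qker_def qdot_add qdot_qscale) (simp add: qdot_def)

lemma qhyperplane_iff_qker: "qhyperplane H \<longleftrightarrow> (\<exists>a. a \<noteq> 0 \<and> H = qker a)"
  by (simp add: qhyperplane_def qker_def qdot_def zero_fun_def)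

lemma hypI_qhyperplane: "I \<noteq> {} \<Longrightarrow> qhyperplane (hypI I)"
  unfolding qhyperplane_iff_qker hypI_eq_qker
  by (rule exI[of _ "indicator I"]) (auto simp: fun_eq_iff indicator_def)

lemma qker_neq_UNIV:
  assumes "a \<noteq> 0" shows "qker a \<noteq> UNIV"
proof -
  obtain j where "a j \<noteq> 0" using assms by (auto simp: fun_eq_iff)
  then have "qunit j \<notin> qker a" by (simp add: qker_def qdot_qunit)
  then show ?thesis by blast
qed

lemma qker_maximal:
  assumes "qker a \<subseteq> V" and V: "qvs.subspace V"
  shows "V = qker a \<or> V = UNIV"
proof (cases "V = qker a")
  case False
  then obtain y where y: "y \<in> V" "qdot a y \<noteq> 0"
    using assms(1) by (auto simp: qker_def)
  have "x \<in> V" for x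
  proof -
    define t where "t = qdot a x / qdot a y"
    have "qdot a (x + qscale (- t) y) = 0"
      unfolding qdot_add qdot_qscale using y(2) by (simp add: t_def)
    then have "x + qscale (- t) y \<in> qker a"
      by (simp add: qker_def)
    then have "x + qscale (- t) y \<in> V"
      using assms(1) by blast
    moreover have "qscale t y \<in> V"
      by (rule qvs.subspace_scale[OF V y(1)])
    ultimately have "(x + qscale (- t) y) + qscale t y \<in> V"
      by (rule qvs.subspace_add[OF V])
    moreover have "(x + qscale (- t) y) + qscale t y = x"
      by (simp add: fun_eq_iff qscale_def)
    ultimately show "x \<in> V" by simp
  qed
  then show ?thesis by blast
qed simp

lemma qhyperplane_subspace: "qhyperplane H \<Longrightarrow> qvs.subspace H"
  using subspace_qker by (auto simp: qhyperplane_iff_qker)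

lemma qhyperplane_neq_UNIV: "qhyperplane (H :: ('n::finite \<Rightarrow> rat) set) \<Longrightarrow> H \<noteq> UNIV"
  using qker_neq_UNIV by (auto simp: qhyperplane_iff_qker)

lemma qhyperplane_maximal:
  "qhyperplane H \<Longrightarrow> H \<subseteq> V \<Longrightarrow> qvs.subspace V \<Longrightarrow> V = H \<or> V = UNIV"
  using qker_maximal by (auto simp: qhyperplane_iff_qker)

lemma bij_qlinear_image_qhyperplane:
  assumes "qlinear \<phi>" "bij \<phi>" "qhyperplane H" "qhyperplane K" "\<phi> ` H \<subseteq> K"
  shows "\<phi> ` H = K"
proof -
  have "module_hom qscale qscale \<phi>"
    using assms(1) by (simp add: qlinear_iff_linear module_hom_iff_linear)
  then have "qvs.subspace (\<phi> -` K)"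
    using qhyperplane_subspace[OF assms(4)] by (rule module_hom.subspace_vimage)
  moreover have "\<phi> -` K \<noteq> UNIV"
    using assms(2) qhyperplane_neq_UNIV[OF assms(4)] by (metis bij_is_surj surj_image_vimage_eq)
  ultimately have "\<phi> -` K = H"
    using qhyperplane_maximal[OF assms(3)] assms(5) by blast
  then show ?thesis
    using assms(2) by (metis bij_is_surj surj_image_vimage_eq)
qed

lemma qlinear_coords: "qlinear (\<lambda>x k. qdot (a k) x)"
  by (simp add: qlinear_def qdot_add[unfolded plus_fun_def] qdot_qscale[unfolded qscale_def])

lemma dual_vectors_imp_inj_coords:
  fixes a y :: "'n::finite \<Rightarrow> 'n \<Rightarrow> rat"
  assumes dual: "\<And>k m. qdot (a k) (y m) = (if k = m then 1 else 0)"
  shows "inj (\<lambda>x k. qdot (a k) x)"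
proof (rule qlinear_surj_imp_inj[OF qlinear_coords], rule surjI)
  fix t :: "'n \<Rightarrow> rat"
  show "(\<lambda>k. qdot (a k) (\<Sum>m\<in>UNIV. qscale (t m) (y m))) = t"
    by (simp add: fun_eq_iff qdot_sum qdot_qscale dual if_distrib cong: if_cong)
qed

lemma exists_dual_vectors:
  fixes a :: "'n \<Rightarrow> 'n::finite \<Rightarrow> rat"
  assumes "\<And>m. \<exists>x. (\<forall>k. k \<noteq> m \<longrightarrow> qdot (a k) x = 0) \<and> qdot (a m) x \<noteq> 0"
  obtains y where "\<And>k m. qdot (a k) (y m) = (if k = m then 1 else 0)"
proof -
  have "\<forall>m. \<exists>x. (\<forall>k. k \<noteq> m \<longrightarrow> qdot (a k) x = 0) \<and> qdot (a m) x \<noteq> 0"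
    using assms by blast
  then obtain x where
    x: "\<forall>m. (\<forall>k. k \<noteq> m \<longrightarrow> qdot (a k) (x m) = 0) \<and> qdot (a m) (x m) \<noteq> 0"
    by (metis choice)
  show ?thesis
    by (rule that[of "\<lambda>m. qscale (1 / qdot (a m) (x m)) (x m)"]) (use x in \<open>simp add: qdot_qscale\<close>)
qed

lemma dual_basis_map:
  fixes a y :: "'n::finite \<Rightarrow> 'n \<Rightarrow> rat" and w :: "'n \<Rightarrow> rat"
  assumes dual: "\<And>k m. qdot (a k) (y m) = (if k = m then 1 else 0)"
    and w: "\<And>m. w m \<noteq> 0"
  defines "\<phi> \<equiv> \<lambda>t. \<Sum>m\<in>UNIV. qscale (t m / w m) (y m)"
  shows "qdot (a k) (\<phi> t) = t k / w k" and "qlinear \<phi>" and "bij \<phi>"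
proof -
  show coords: "qdot (a k) (\<phi> t) = t k / w k" for k t
    by (simp add: \<phi>_def qdot_sum qdot_qscale dual if_distrib cong: if_cong)
  have "\<phi> t i = (\<Sum>m\<in>UNIV. t m / w m * y m i)" for t i
    by (simp add: \<phi>_def sum_fun_apply qscale_def)
  then show "qlinear \<phi>"
    by (simp add: qlinear_def fun_eq_iff add_divide_distrib distrib_right sum.distrib
        sum_distrib_left mult.assoc)
  have inj_coords: "inj (\<lambda>x k. qdot (a k) x)"
    by (rule dual_vectors_imp_inj_coords[OF dual])
  show "bij \<phi>"
  proof (rule bijI)
    show "inj \<phi>"
    proof (rule injI)
      fix s t assume "\<phi> s = \<phi> t"
      then have "s k / w k = t k / w k" for k
        by (metis coords)
      then show "s = t"
        using w by (simp add: fun_eq_iff)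
    qed
    show "surj \<phi>"
    proof (rule surjI)
      fix z
      have "(\<lambda>k. qdot (a k) (\<phi> (\<lambda>k. w k * qdot (a k) z))) = (\<lambda>k. qdot (a k) z)"
        using w by (simp add: coords)
      then show "\<phi> (\<lambda>k. w k * qdot (a k) z) = z"
        by (rule injD[OF inj_coords])
    qed
  qed
qed

text \<open>The dual vectors \<open>y\<^sub>m\<close> alone would match the coordinate hyperplanes; rescaling them by
  \<open>w\<^sub>m = a\<^sub>0(y\<^sub>m) \<noteq> 0\<close> makes \<open>H\<^sub>N\<close> come out right as well.\<close>
lemma frame_transport:
  fixes a :: "'n \<Rightarrow> 'n::finite \<Rightarrow> rat" and a0 :: "'n \<Rightarrow> rat"
  assumes dual: "\<And>m. \<exists>x. (\<forall>k. k \<noteq> m \<longrightarrow> qdot (a k) x = 0) \<and> qdot (a m) x \<noteq> 0"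
    and generic: "\<And>m. \<exists>x. (\<forall>k. k \<noteq> m \<longrightarrow> qdot (a k) x = 0) \<and> qdot a0 x \<noteq> 0"
  obtains \<phi> where "qlinear \<phi>" "bij \<phi>"
    "\<And>k. \<phi> ` hypI {k} = qker (a k)" "\<phi> ` hypI UNIV = qker a0"
proof -
  obtain y where y: "\<And>k m. qdot (a k) (y m) = (if k = m then 1 else 0)"
    using exists_dual_vectors[OF dual] by blast
  define w where "w m = qdot a0 (y m)" for m
  have w: "w m \<noteq> 0" for m
  proof -
    obtain z where z: "\<forall>k. k \<noteq> m \<longrightarrow> qdot (a k) z = 0" "qdot a0 z \<noteq> 0"
      using generic by blast
    have "(\<lambda>k. qdot (a k) z) = (\<lambda>k. qdot (a k) (qscale (qdot (a m) z) (y m)))"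
      using z(1) by (auto simp: fun_eq_iff qdot_qscale y)
    then have "z = qscale (qdot (a m) z) (y m)"
      by (rule injD[OF dual_vectors_imp_inj_coords[OF y]])
    then have "qdot a0 z = qdot a0 (qscale (qdot (a m) z) (y m))"
      by (rule arg_cong)
    with z(2) show ?thesis
      by (auto simp: qdot_qscale w_def)
  qed
  define \<phi> where "\<phi> = (\<lambda>t. \<Sum>m\<in>UNIV. qscale (t m / w m) (y m))"
  have coords: "qdot (a k) (\<phi> t) = t k / w k" for k t
    unfolding \<phi>_def by (rule dual_basis_map(1)[OF y w])
  have linear: "qlinear \<phi>" and bij: "bij \<phi>"
    unfolding \<phi>_def by (rule dual_basis_map(2,3)[OF y w])+
  have a0_\<phi>: "qdot a0 (\<phi> t) = (\<Sum>m\<in>UNIV. t m)" for t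
    using w by (simp add: \<phi>_def qdot_sum qdot_qscale w_def[symmetric])
  have image_vimage: "\<phi> ` (\<phi> -` K) = K" for K
    by (rule surj_image_vimage_eq[OF bij_is_surj[OF bij]])
  show ?thesis
  proof (rule that[OF linear bij])
    have "\<phi> -` qker (a k) = hypI {k}" for k
      using w[of k] by (auto simp: qker_def coords hypI_singleton)
    then show "\<phi> ` hypI {k} = qker (a k)" for k
      using image_vimage by metis
    have "\<phi> -` qker a0 = hypI UNIV"
      by (auto simp: qker_def a0_\<phi> hypI_def)
    then show "\<phi> ` hypI UNIV = qker a0"
      using image_vimage by metis
  qed
qed

lemma Inter_in_lat: "B \<subseteq> L \<Longrightarrow> \<Inter>B \<in> lat L"
  unfolding lat_def by blast

lemma mem_lat: "H \<in> L \<Longrightarrow> H \<in> lat L"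
  using Inter_in_lat[of "{H}"] by simp

lemma UNIV_mem_lat: "UNIV \<in> lat L"
  using Inter_in_lat[of "{}"] by simp

lemma lat_subspace: "\<forall>H\<in>L. qhyperplane H \<Longrightarrow> X \<in> lat L \<Longrightarrow> qvs.subspace X"
  unfolding lat_def using qhyperplane_subspace by (auto intro!: qvs.subspace_Inter)

text \<open>The bottom of \<open>L(A)\<close> under reverse inclusion is the whole space, so its atoms are the
  maximal proper flats.\<close>
definition lat_atom :: "('n \<Rightarrow> rat) set set \<Rightarrow> ('n \<Rightarrow> rat) set \<Rightarrow> bool" where
  "lat_atom L X \<longleftrightarrow> X \<in> lat L \<and> X \<noteq> UNIV \<and> (\<forall>Y\<in>lat L. X \<subseteq> Y \<longrightarrow> Y = X \<or> Y = UNIV)"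

lemma lat_atom_iff_mem:
  fixes L :: "('n::finite \<Rightarrow> rat) set set"
  assumes L: "\<forall>H\<in>L. qhyperplane H"
  shows "lat_atom L X \<longleftrightarrow> X \<in> L"
proof
  assume "X \<in> L"
  then have "qhyperplane X" using L by blast
  moreover have "Y = X \<or> Y = UNIV" if "Y \<in> lat L" "X \<subseteq> Y" for Y
    using qhyperplane_maximal[OF \<open>qhyperplane X\<close> that(2) lat_subspace[OF L that(1)]] .
  ultimately show "lat_atom L X"
    unfolding lat_atom_def using \<open>X \<in> L\<close> mem_lat qhyperplane_neq_UNIV by blast
next
  assume X: "lat_atom L X"
  then obtain B where B: "B \<subseteq> L" "X = \<Inter>B"
    unfolding lat_atom_def lat_def by auto
  with X obtain H where H: "H \<in> B"
    unfolding lat_atom_def by auto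
  with B have "H \<in> lat L" "H \<noteq> UNIV" "X \<subseteq> H"
    using L mem_lat qhyperplane_neq_UNIV by blast+
  with X have "H = X"
    unfolding lat_atom_def by blast
  with B H show "X \<in> L" by blast
qed

definition coordinate_frame :: "('n::finite \<Rightarrow> rat) set set" where
  "coordinate_frame = {hypI {i} | i. True} \<union> {hypI UNIV}"

lemma hypI_eq_span_coordinate_flats:
  fixes I :: "'n::finite set"
  shows "hypI I = qvs.span (\<Inter>{hypI {k} | k. k \<in> I} \<union> \<Inter>({hypI {k} | k. k \<notin> I} \<union> {hypI UNIV}))"
    (is "_ = qvs.span (?X1 \<union> ?X2)")
proof
  have X1: "x \<in> ?X1 \<longleftrightarrow> (\<forall>k\<in>I. x k = 0)" for x
    by (auto simp: hypI_singleton)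
  have X2: "x \<in> ?X2 \<longleftrightarrow> (\<forall>k. k \<notin> I \<longrightarrow> x k = 0) \<and> (\<Sum>i\<in>UNIV. x i) = 0" for x
    by (auto simp: hypI_singleton hypI_def)
  have "?X1 \<union> ?X2 \<subseteq> hypI I"
  proof
    fix x assume "x \<in> ?X1 \<union> ?X2"
    then show "x \<in> hypI I"
    proof
      assume "x \<in> ?X1"
      then have "\<forall>k\<in>I. x k = 0"
        using X1 by blast
      then show ?thesis by (simp add: hypI_def)
    next
      assume "x \<in> ?X2"
      then have outside: "\<forall>k. k \<notin> I \<longrightarrow> x k = 0" and "(\<Sum>i\<in>UNIV. x i) = 0"
        using X2 by blast+
      moreover have "(\<Sum>i\<in>I. x i) = (\<Sum>i\<in>UNIV. x i)"
        by (rule sum.mono_neutral_left) (use outside in auto)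
      ultimately show ?thesis by (simp add: hypI_def)
    qed
  qed
  then show "qvs.span (?X1 \<union> ?X2) \<subseteq> hypI I"
    using subspace_qker by (intro qvs.span_minimal) (simp_all add: hypI_eq_qker)
  show "hypI I \<subseteq> qvs.span (?X1 \<union> ?X2)"
  proof
    fix x assume x: "x \<in> hypI I"
    define u where "u k = (if k \<in> I then 0 else x k)" for k
    define v where "v k = (if k \<in> I then x k else 0)" for k
    have "u \<in> ?X1"
      unfolding X1 by (simp add: u_def)
    moreover have "v \<in> ?X2"
      using x unfolding X2 by (simp add: v_def hypI_def sum.If_cases)
    moreover have "x = u + v"
      by (simp add: fun_eq_iff u_def v_def)
    ultimately show "x \<in> qvs.span (?X1 \<union> ?X2)"
      by (simp add: qvs.span_add qvs.span_base)
  qed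
qed

lemma generated_coordinate_frame:
  fixes A :: "('n::finite \<Rightarrow> rat) set set"
  assumes "coordinate_frame \<subseteq> A" "A \<subseteq> range hypI"
  shows "generated A coordinate_frame = A"
proof
  have "Gen A coordinate_frame i \<subseteq> A" for i
    using assms(1) by (cases i) auto
  then show "generated A coordinate_frame \<subseteq> A"
    unfolding generated_def by blast
  show "A \<subseteq> generated A coordinate_frame"
  proof
    fix H assume H: "H \<in> A"
    then obtain I where I: "H = hypI I"
      using assms(2) by blast
    let ?X1 = "\<Inter>{hypI {k} | k. k \<in> I}"
    let ?X2 = "\<Inter>({hypI {k} | k. k \<notin> I} \<union> {hypI UNIV})"
    have "{hypI {k} | k. k \<in> I} \<subseteq> coordinate_frame"
      and "{hypI {k} | k. k \<notin> I} \<union> {hypI UNIV} \<subseteq> coordinate_frame"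
      by (auto simp: coordinate_frame_def)
    then have "{?X1, ?X2} \<subseteq> lat (Gen A coordinate_frame 0)"
      using Inter_in_lat unfolding Gen.simps(1) by blast
    moreover have "H = subspace_sum {?X1, ?X2}"
      unfolding I subspace_sum_def qspan_eq_span
      using hypI_eq_span_coordinate_flats by simp
    ultimately have "H \<in> Gen A coordinate_frame (Suc 0)"
      using H unfolding Gen.simps(2) by blast
    then show "H \<in> generated A coordinate_frame"
      unfolding generated_def by blast
  qed
qed

locale flat_iso =
  fixes A C :: "('n::finite \<Rightarrow> rat) set set"
    and f :: "('n \<Rightarrow> rat) set \<Rightarrow> ('n \<Rightarrow> rat) set"
  assumes hyperplanes_A: "\<forall>H\<in>A. qhyperplane H"
    and hyperplanes_C: "\<forall>H\<in>C. qhyperplane H"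
    and bij_f: "bij_betw f (lat A) (lat C)"
    and f_subset_iff: "X \<in> lat A \<Longrightarrow> Y \<in> lat A \<Longrightarrow> f X \<subseteq> f Y \<longleftrightarrow> X \<subseteq> Y"

begin

lemma f_in_lat: "X \<in> lat A \<Longrightarrow> f X \<in> lat C"
  using bij_f bij_betwE by blast

lemma f_inj: "X \<in> lat A \<Longrightarrow> Y \<in> lat A \<Longrightarrow> f X = f Y \<Longrightarrow> X = Y"
  using f_subset_iff by blast

lemma image_f_lat: "f ` lat A = lat C"
  using bij_f by (simp add: bij_betw_def)

lemma f_surj: "Z \<in> lat C \<Longrightarrow> \<exists>X\<in>lat A. Z = f X"
  using image_f_lat by blast

lemma f_UNIV: "f UNIV = UNIV"
proof -
  obtain X where X: "X \<in> lat A" "UNIV = f X"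
    using f_surj[OF UNIV_mem_lat] by blast
  then show ?thesis
    using f_subset_iff[OF X(1) UNIV_mem_lat] by auto
qed

lemma f_eq_UNIV_iff: "X \<in> lat A \<Longrightarrow> f X = UNIV \<longleftrightarrow> X = UNIV"
  using f_inj[OF _ UNIV_mem_lat] f_UNIV by auto

lemma lat_atom_f_iff:
  assumes X: "X \<in> lat A"
  shows "lat_atom C (f X) \<longleftrightarrow> lat_atom A X"
proof -
  have "(\<forall>Z\<in>lat C. f X \<subseteq> Z \<longrightarrow> Z = f X \<or> Z = UNIV) \<longleftrightarrow>
        (\<forall>Y\<in>lat A. f X \<subseteq> f Y \<longrightarrow> f Y = f X \<or> f Y = UNIV)"
    unfolding image_f_lat[symmetric] by simp
  also have "\<dots> \<longleftrightarrow> (\<forall>Y\<in>lat A. X \<subseteq> Y \<longrightarrow> Y = X \<or> Y = UNIV)"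
  proof (intro ball_cong refl)
    fix Y assume Y: "Y \<in> lat A"
    show "(f X \<subseteq> f Y \<longrightarrow> f Y = f X \<or> f Y = UNIV) \<longleftrightarrow> (X \<subseteq> Y \<longrightarrow> Y = X \<or> Y = UNIV)"
      using f_subset_iff[OF X Y] f_eq_UNIV_iff[OF Y] f_inj[OF Y X] by blast
  qed
  finally show ?thesis
    using X f_in_lat f_eq_UNIV_iff by (simp add: lat_atom_def)
qed

lemma image_f_arrangement: "f ` A = C"
proof -
  have "Z \<in> C \<longleftrightarrow> lat_atom C Z" "X \<in> A \<longleftrightarrow> lat_atom A X" for X Z
    using lat_atom_iff_mem hyperplanes_A hyperplanes_C by blast+
  then have fC_iff: "f X \<in> C \<longleftrightarrow> X \<in> A" if "X \<in> lat A" for X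
    using lat_atom_f_iff[OF that] by simp
  then show ?thesis
  proof (intro equalityI subsetI)
    fix Z assume "Z \<in> C"
    then obtain X where "X \<in> lat A" "Z = f X"
      using f_surj mem_lat by blast
    with \<open>Z \<in> C\<close> show "Z \<in> f ` A"
      using fC_iff by blast
  qed (use fC_iff mem_lat in blast)
qed

lemma f_Inter:
  assumes B: "B \<subseteq> A"
  shows "f (\<Inter>B) = \<Inter>(f ` B)"
proof
  have IB: "\<Inter>B \<in> lat A" and BA: "\<And>H. H \<in> B \<Longrightarrow> H \<in> lat A"
    using B Inter_in_lat mem_lat by blast+
  show "f (\<Inter>B) \<subseteq> \<Inter>(f ` B)"
  proof (rule INF_greatest)
    fix H assume "H \<in> B"
    then show "f (\<Inter>B) \<subseteq> f H"
      using f_subset_iff[OF IB BA[OF \<open>H \<in> B\<close>]] by blast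
  qed
  have "f ` B \<subseteq> C"
    using B image_f_arrangement by blast
  then have "\<Inter>(f ` B) \<in> lat C"
    by (rule Inter_in_lat)
  then obtain X where X: "X \<in> lat A" "\<Inter>(f ` B) = f X"
    using f_surj by blast
  have "X \<subseteq> H" if "H \<in> B" for H
    using f_subset_iff[OF X(1) BA[OF that]] X(2) that by blast
  then have "f X \<subseteq> f (\<Inter>B)"
    using f_subset_iff[OF X(1) IB] by blast
  with X(2) show "\<Inter>(f ` B) \<subseteq> f (\<Inter>B)" by simp
qed

lemma Inter_image_f_eq_iff:
  assumes "B1 \<subseteq> A" "B2 \<subseteq> A"
  shows "\<Inter>(f ` B1) = \<Inter>(f ` B2) \<longleftrightarrow> \<Inter>B1 = \<Inter>B2"
proof -
  have "\<Inter>(f ` B1) = \<Inter>(f ` B2) \<longleftrightarrow> f (\<Inter>B1) = f (\<Inter>B2)"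
    using assms by (simp add: f_Inter)
  also have "\<dots> \<longleftrightarrow> \<Inter>B1 = \<Inter>B2"
    using f_inj[OF Inter_in_lat[OF assms(1)] Inter_in_lat[OF assms(2)]] by auto
  finally show ?thesis .
qed

text \<open>The unit vector \<open>e\<^sub>m\<close> separates \<open>\<Inter>\<^sub>k\<^sub>\<noteq>\<^sub>m H\<^sub>k\<close> from both \<open>\<Inter>\<^sub>k H\<^sub>k\<close> and
  \<open>H\<^sub>N \<inter> \<Inter>\<^sub>k\<^sub>\<noteq>\<^sub>m H\<^sub>k\<close>; being injective on flats, \<open>f\<close> keeps the images apart.\<close>
lemma frame_images_general_position:
  assumes frame: "coordinate_frame \<subseteq> A"
    and a: "\<And>k. f (hypI {k}) = qker (a k)" and a0: "f (hypI UNIV) = qker a0"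
  shows "\<exists>x. (\<forall>k. k \<noteq> m \<longrightarrow> qdot (a k) x = 0) \<and> qdot (a m) x \<noteq> 0"
    and "\<exists>x. (\<forall>k. k \<noteq> m \<longrightarrow> qdot (a k) x = 0) \<and> qdot a0 x \<noteq> 0"
proof -
  define B where "B P = (\<lambda>k :: 'n. hypI {k}) ` {k. P k}" for P
  have B: "B P \<subseteq> A" "insert (hypI UNIV) (B P) \<subseteq> A" for P
    using frame by (auto simp: B_def coordinate_frame_def)
  have f_B: "\<Inter>(f ` B P) = {x. \<forall>k. P k \<longrightarrow> qdot (a k) x = 0}" for P
    by (auto simp: B_def image_image a qker_def)
  have qunit_B: "qunit m \<in> \<Inter>(B (\<lambda>k. k \<noteq> m))" "qunit m \<notin> \<Inter>(B (\<lambda>_. True))"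
    and qunit_UNIV: "qunit m \<notin> hypI UNIV"
    by (auto simp: B_def hypI_singleton hypI_def qunit_def)
  have "\<Inter>(B (\<lambda>k. k \<noteq> m)) \<noteq> \<Inter>(B (\<lambda>_. True))"
    using qunit_B by blast
  then have "\<Inter>(f ` B (\<lambda>k. k \<noteq> m)) \<noteq> \<Inter>(f ` B (\<lambda>_. True))"
    unfolding Inter_image_f_eq_iff[OF B(1) B(1)] .
  then show "\<exists>x. (\<forall>k. k \<noteq> m \<longrightarrow> qdot (a k) x = 0) \<and> qdot (a m) x \<noteq> 0"
    unfolding f_B by auto
  have "qunit m \<notin> \<Inter>(insert (hypI UNIV) (B (\<lambda>k. k \<noteq> m)))"
    using qunit_UNIV by simp
  then have "\<Inter>(insert (hypI UNIV) (B (\<lambda>k. k \<noteq> m))) \<noteq> \<Inter>(B (\<lambda>k. k \<noteq> m))"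
    using qunit_B(1) by blast
  then have "\<Inter>(f ` insert (hypI UNIV) (B (\<lambda>k. k \<noteq> m))) \<noteq> \<Inter>(f ` B (\<lambda>k. k \<noteq> m))"
    unfolding Inter_image_f_eq_iff[OF B(2) B(1)] .
  then show "\<exists>x. (\<forall>k. k \<noteq> m \<longrightarrow> qdot (a k) x = 0) \<and> qdot a0 x \<noteq> 0"
    unfolding image_insert Inter_insert f_B a0 qker_def by auto
qed

lemma frame_transport_exists:
  assumes frame: "coordinate_frame \<subseteq> A"
  obtains \<phi> where "qlinear \<phi>" "bij \<phi>" "\<And>H. H \<in> coordinate_frame \<Longrightarrow> \<phi> ` H = f H"
proof -
  have "qhyperplane (f H)" if "H \<in> coordinate_frame" for H
    using that frame image_f_arrangement hyperplanes_C by blast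
  then have normal: "\<exists>b. f H = qker b" if "H \<in> coordinate_frame" for H
    using that qhyperplane_iff_qker by blast
  then have "\<exists>b. f (hypI {k}) = qker b" for k
    unfolding coordinate_frame_def by blast
  then obtain a where a: "\<And>k. f (hypI {k}) = qker (a k)"
    by metis
  obtain a0 where a0: "f (hypI UNIV) = qker a0"
    using normal unfolding coordinate_frame_def by blast
  note general_position = frame_images_general_position[OF frame a a0]
  obtain \<phi> where \<phi>: "qlinear \<phi>" "bij \<phi>"
    "\<And>k. \<phi> ` hypI {k} = qker (a k)" "\<phi> ` hypI UNIV = qker a0"
    using frame_transport[OF general_position] by blast
  show ?thesis
  proof (rule that[OF \<phi>(1,2)])
    fix H :: "('n \<Rightarrow> rat) set"
    assume "H \<in> coordinate_frame"
    then consider k where "H = hypI {k}" | "H = hypI UNIV"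
      unfolding coordinate_frame_def by blast
    then show "\<phi> ` H = f H"
      by cases (simp_all only: \<phi>(3,4) a a0)
  qed
qed

lemma image_Inter_eq_f_Inter:
  assumes "bij \<phi>" "B \<subseteq> A" "\<And>H. H \<in> B \<Longrightarrow> \<phi> ` H = f H"
  shows "\<phi> ` \<Inter>B = f (\<Inter>B)"
proof -
  have "\<phi> ` \<Inter>B = (\<Inter>H\<in>B. \<phi> ` H)"
    using bij_image_INT[OF assms(1), of "\<lambda>H. H" B] by simp
  also have "\<dots> = \<Inter>(f ` B)"
    by (rule INF_cong[OF refl assms(3)])
  also have "\<dots> = f (\<Inter>B)"
    using f_Inter[OF assms(2)] by simp
  finally show ?thesis .
qed

text \<open>The induction step: \<open>\<phi>\<close> maps a generated hyperplane \<open>H\<close> into the hyperplane \<open>f H\<close>,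
  because \<open>H\<close> is spanned by flats below it on which \<open>\<phi>\<close> and \<open>f\<close> already agree; a
  hyperplane mapped into a hyperplane is mapped onto it.\<close>
lemma Gen_transport:
  assumes \<phi>: "qlinear \<phi>" "bij \<phi>"
    and S: "S \<subseteq> A" "\<And>H. H \<in> S \<Longrightarrow> \<phi> ` H = f H"
  shows "H \<in> Gen A S i \<Longrightarrow> \<phi> ` H = f H"
proof (induction i arbitrary: H)
  case 0
  then show ?case by (simp add: S(2))
next
  case (Suc i)
  then have H: "H \<in> A" and "\<exists>J \<subseteq> lat (Gen A S i). H = subspace_sum J"
    by auto
  then obtain J where J: "J \<subseteq> lat (Gen A S i)" "H = qvs.span (\<Union>J)"
    unfolding subspace_sum_def qspan_eq_span by blast
  have Gen_A: "Gen A S i \<subseteq> A"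
    using S(1) by (cases i) auto
  have hyperplane_fH: "qhyperplane (f H)"
    using H image_f_arrangement hyperplanes_C by blast
  have "\<phi> ` X \<subseteq> f H" if "X \<in> J" for X
  proof -
    have "X \<in> lat (Gen A S i)"
      using J(1) that by blast
    then obtain B where B: "B \<subseteq> Gen A S i" "X = \<Inter>B"
      by (auto simp: lat_def)
    have BA: "B \<subseteq> A"
      using B(1) Gen_A by blast
    have "\<phi> ` X = f X"
      unfolding B(2) by (rule image_Inter_eq_f_Inter[OF \<phi>(2) BA]) (use Suc.IH B(1) in blast)
    moreover have "X \<subseteq> H"
      using J(2) that qvs.span_superset by blast
    then have "f X \<subseteq> f H"
      using f_subset_iff[OF Inter_in_lat[OF BA] mem_lat[OF H]] B(2) by simp
    ultimately show ?thesis by simp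
  qed
  then have "qvs.span (\<phi> ` (\<Union>J)) \<subseteq> f H"
    using qhyperplane_subspace[OF hyperplane_fH] by (intro qvs.span_minimal) blast+
  moreover have "module_hom qscale qscale \<phi>"
    using \<phi>(1) by (simp add: qlinear_iff_linear module_hom_iff_linear)
  ultimately have "\<phi> ` H \<subseteq> f H"
    unfolding J(2) by (simp add: module_hom.span_image)
  then show ?case
    using H hyperplanes_A by (intro bij_qlinear_image_qhyperplane[OF \<phi> _ hyperplane_fH]) blast+
qed

lemma arrangement_eq_image_if_generated:
  assumes "qlinear \<phi>" "bij \<phi>" "S \<subseteq> A" "\<And>H. H \<in> S \<Longrightarrow> \<phi> ` H = f H"
    and "generated A S = A"
  shows "C = (\<lambda>H. \<phi> ` H) ` A"
proof -
  have "\<phi> ` H = f H" if "H \<in> A" for H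
  proof -
    have "H \<in> generated A S"
      using that assms(5) by simp
    then obtain i where "H \<in> Gen A S i"
      unfolding generated_def by blast
    then show ?thesis
      using Gen_transport[OF assms(1-4)] by blast
  qed
  then have "(\<lambda>H. \<phi> ` H) ` A = f ` A"
    by (rule image_cong[OF refl])
  then show ?thesis
    using image_f_arrangement by simp
qed

end

lemma lat_iso_imp_flat_iso:
  assumes "arrangement C" "\<forall>H\<in>A. qhyperplane H" "lat_iso C A"
  shows "\<exists>f. flat_iso A C f"
proof -
  obtain g where g: "bij_betw g (lat C) (lat A)"
    and g_le: "\<forall>X\<in>lat C. \<forall>Y\<in>lat C. lat_le X Y \<longleftrightarrow> lat_le (g X) (g Y)"
    using assms(3) unfolding lat_iso_def by blast
  define f where "f = inv_into (lat C) g"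
  have f: "bij_betw f (lat A) (lat C)"
    unfolding f_def by (rule bij_betw_inv_into[OF g])
  have g_f: "g (f X) = X" if "X \<in> lat A" for X
    using g that unfolding f_def by (simp add: bij_betw_inv_into_right)
  have "f X \<subseteq> f Y \<longleftrightarrow> X \<subseteq> Y" if "X \<in> lat A" "Y \<in> lat A" for X Y
  proof -
    have "f X \<in> lat C" "f Y \<in> lat C"
      using f that by (simp_all add: bij_betwE)
    then have "lat_le (f Y) (f X) \<longleftrightarrow> lat_le (g (f Y)) (g (f X))"
      using g_le by blast
    then show ?thesis
      using that g_f by (simp add: lat_le_def)
  qed
  with assms(1,2) f have "flat_iso A C f"
    unfolding flat_iso_def arrangement_def by blast
  then show ?thesis by blast
qed

theorem proj_unique_if_generated_by_frame:
  fixes A :: "('n::finite \<Rightarrow> rat) set set"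
  assumes hyperplanes: "\<forall>H\<in>A. qhyperplane H" and frame: "coordinate_frame \<subseteq> A"
    and generated: "generated A coordinate_frame = A"
  shows "proj_unique A"
  unfolding proj_unique_def
proof (intro allI impI)
  fix C assume C: "arrangement C \<and> lat_iso C A"
  then obtain f where "flat_iso A C f"
    using lat_iso_imp_flat_iso[of C A] hyperplanes by blast
  then interpret flat_iso A C f .
  obtain \<phi> where \<phi>: "qlinear \<phi>" "bij \<phi>" "\<And>H. H \<in> coordinate_frame \<Longrightarrow> \<phi> ` H = f H"
    using frame_transport_exists[OF frame] by blast
  then have "C = (\<lambda>H. \<phi> ` H) ` A"
    using arrangement_eq_image_if_generated[OF \<phi>(1,2) frame \<phi>(3) generated] by blast
  with \<phi> show "\<exists>\<phi>. qlinear \<phi> \<and> bij \<phi> \<and> C = (\<lambda>H. \<phi> ` H) ` A"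
    by blast
qed

theorem mainTheorem4:
  fixes E :: "'n::finite \<Rightarrow> 'n \<Rightarrow> bool"
  assumes "simple_graph E"
    and "connected_on E UNIV"
  defines "S \<equiv> {hypI {i} | i. True} \<union> {hypI UNIV}"
  shows "generated (subgraph_arr E) S = subgraph_arr E \<and> proj_unique (subgraph_arr E)"
proof -
  have "connected_on E {i}" for i
    by (simp add: connected_on_def)
  then have frame: "coordinate_frame \<subseteq> subgraph_arr E"
    using assms(2) by (auto simp: coordinate_frame_def subgraph_arr_def)
  have "subgraph_arr E \<subseteq> range hypI"
    by (auto simp: subgraph_arr_def)
  then have generated: "generated (subgraph_arr E) coordinate_frame = subgraph_arr E"
    by (rule generated_coordinate_frame[OF frame])
  have "\<forall>H\<in>subgraph_arr E. qhyperplane H"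
    using hypI_qhyperplane unfolding subgraph_arr_def by blast
  then have "proj_unique (subgraph_arr E)"
    using frame generated by (rule proj_unique_if_generated_by_frame)
  moreover have "S = coordinate_frame"
    by (simp add: S_def coordinate_frame_def)
  ultimately show ?thesis
    using generated by simp
qed

end
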